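(* Let $(S_n,X_n)_{n\ge 0}$ be an alternating non-homogeneous semi-Markov process with $S_0=1$, $X_0=0$, whose semi-Markov kernels $G_Y(x,\cdot)$ and $G_Z(x,\cdot)$ are, for each $x\ge 0$, Gamma distributions with shape and rate parameters $(k_Y(x),\lambda_Y(x))$ and $(k_Z(x),\lambda_Z(x))$ respectively, i.e. with densities $$g_T(x,\tau)=\frac{\lambda_T(x)^{k_T(x)}\tau^{k_T(x)-1}e^{-\lambda_T(x)\tau}}{\Gamma(k_T(x))},\qquad \tau\ge 0,\ T\in\{Y,Z\},$$ where $k_Y,k_Z:[0,\infty)\to[1,\infty)$ and $\lambda_Y,\lambda_Z:[0,\infty)\to(0,\infty)$ are measurable. Suppose there is $c>0$ such that $\lambda_Y(x)\le c$ and $\lambda_Z(x)\le c$ for all $x\ge 0$. Then $\mathbb P(X_\infty<\infty)=0$.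
   Context: Let $(S_n,X_n)_{n\ge0}$ be random variables on a probability space with $S_n\in\{0,1\}$, $0=X_0\le X_1\le X_2\le\cdots$, $S_0=1$, and alternating states: $S_n=1$ for even $n$ and $S_n=0$ for odd $n$. Write $T_{n+1}=X_{n+1}-X_n$ (sojourn times). The process is called an alternating non-homogeneous semi-Markov process with semi-Markov kernels $G_Y,G_Z$ if for every $n\ge 0$ the conditional distribution of $T_{n+1}$ given $(S_0,X_0),\dots,(S_n,X_n)$ depends only on $(S_n,X_n)$ (and not on $n$), with $\mathbb P(T_{n+1}\le \tau\mid S_n=1,X_n=x)=G_Y(x,\tau)$ and $\mathbb P(T_{n+1}\le\tau\mid S_n=0,X_n=x)=G_Z(x,\tau)$ for all $x,\tau\ge 0$; here for each $x\ge0$, $G_Y(x,\cdot)$ and $G_Z(x,\cdot)$ are distribution functions on $[0,\infty)$, jointly measurable in $(x,\tau)$, absolutely continuous with densities $g_Y(x,\cdot)$, $g_Z(x,\cdot)$. Periods spent in state $1$ are called $Y$-phases, periods in state $0$ are $Z$-phases. The explosion time is $X_\infty=\lim_{n\to\infty}X_n$. *)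

theory Defs
  imports "HOL-Probability.Probability"
begin

definition gamma_density :: "real \<Rightarrow> real \<Rightarrow> real \<Rightarrow> real" where
  "gamma_density k l t =
     (if t \<ge> 0 then l powr k * t powr (k - 1) * exp (- l * t) / Gamma k else 0)"

definition gamma_cdf :: "real \<Rightarrow> real \<Rightarrow> real \<Rightarrow> real" where
  "gamma_cdf k l \<tau> = (LINT t:{0..\<tau>}|lborel. gamma_density k l t)"

definition hist_alg ::
  "'a measure \<Rightarrow> (nat \<Rightarrow> 'a \<Rightarrow> nat) \<Rightarrow> (nat \<Rightarrow> 'a \<Rightarrow> real) \<Rightarrow> nat \<Rightarrow> 'a measure" where
  "hist_alg M S X n = sigma (space M)
     ({S i -` A \<inter> space M | i A. i \<le> n} \<union>
      {X i -` B \<inter> space M | i B. i \<le> n \<and> B \<in> sets borel})"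

definition alt_semi_markov ::
  "'a measure \<Rightarrow> (nat \<Rightarrow> 'a \<Rightarrow> nat) \<Rightarrow> (nat \<Rightarrow> 'a \<Rightarrow> real)
    \<Rightarrow> (real \<Rightarrow> real \<Rightarrow> real) \<Rightarrow> (real \<Rightarrow> real \<Rightarrow> real) \<Rightarrow> bool" where
  "alt_semi_markov M S X GY GZ \<longleftrightarrow>
     prob_space M \<and>
     (\<forall>n. X n \<in> borel_measurable M) \<and>
     (\<forall>n. \<forall>\<omega>\<in>space M. S n \<omega> = (if even n then 1 else 0)) \<and>
     (\<forall>\<omega>\<in>space M. X 0 \<omega> = 0) \<and>
     (\<forall>n. \<forall>\<omega>\<in>space M. X n \<omega> \<le> X (Suc n) \<omega>) \<and>
     (\<forall>n \<tau>. \<tau> \<ge> 0 \<longrightarrow>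
        (AE \<omega> in M. real_cond_exp M (hist_alg M S X n)
             (indicator {\<omega>'\<in>space M. X (Suc n) \<omega>' - X n \<omega>' \<le> \<tau>}) \<omega>
           = (if S n \<omega> = 1 then GY (X n \<omega>) \<tau> else GZ (X n \<omega>) \<tau>)))"

end

theory Submission
  imports Defs
begin

text \<open>Since \<open>k \<ge> 1\<close> and \<open>\<lambda> \<le> c\<close>, a Gamma variable with shape \<open>k\<close> and rate \<open>\<lambda>\<close> is at most
  \<open>1/(4c)\<close> with probability at most \<open>1/2\<close>. As the kernels are the conditional laws of the
  sojourns given the past, from any index on the next \<open>j\<close> sojourns are all that short with
  probability at most \<open>2\<^sup>-\<^sup>j\<close>; hence almost surely infinitely many sojourns exceed
  \<open>1/(4c)\<close>, and \<open>X\<^sub>n\<close> is unbounded.\<close>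

lemma Gamma_real_ge_one:
  assumes "(x::real) \<ge> 2"
  shows "Gamma x \<ge> 1"
proof -
  have "Gamma (2::real) = 1" by (simp add: Gamma_numeral)
  moreover have "Gamma (2::real) \<le> Gamma x"
    using assms Gamma_real_strict_mono[of 2 x] by (cases "x = 2") auto
  ultimately show ?thesis by simp
qed

lemma self_le_four_powr_diff_one:
  assumes "(k::real) \<ge> 1"
  shows "k \<le> 4 powr (k - 1)"
proof -
  have "exp 1 \<le> (4::real)" using exp_le by linarith
  then have "1 \<le> ln (4::real)" by (simp add: ln_ge_iff)
  then have "k \<le> 1 + (k - 1) * ln 4"
    using assms mult_left_mono[of 1 "ln 4" "k - 1"] by simp
  also have "\<dots> \<le> exp ((k - 1) * ln 4)" by (rule exp_ge_add_one_self)
  also have "\<dots> = 4 powr (k - 1)" by (simp add: powr_def)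
  finally show ?thesis .
qed

lemma gamma_density_le:
  assumes "k \<ge> 1" "l > 0" "t \<in> {0..\<tau>}"
  shows "gamma_density k l t \<le> l powr k * \<tau> powr (k - 1) / Gamma k"
proof -
  have "t powr (k - 1) * exp (- l * t) \<le> \<tau> powr (k - 1) * 1"
    using assms by (intro mult_mono powr_mono2) auto
  then show ?thesis
    using assms unfolding gamma_density_def
    by (auto intro!: divide_right_mono simp: mult.assoc mult_left_mono)
qed

lemma gamma_cdf_le_powr:
  assumes "k \<ge> 1" "l > 0" "\<tau> > 0"
  shows "gamma_cdf k l \<tau> \<le> (l * \<tau>) powr k / Gamma k"
proof -
  define C where "C = l powr k * \<tau> powr (k - 1) / Gamma k"
  have "C \<ge> 0" using assms unfolding C_def by simp
  have "gamma_cdf k l \<tau> \<le> C * \<tau>"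
  proof (cases "set_integrable lborel {0..\<tau>} (gamma_density k l)")
    case True
    have "set_integrable lborel {0..\<tau>} (\<lambda>_. C)"
      using assms by (simp add: set_integrable_def integrable_real_indicator)
    then have "gamma_cdf k l \<tau> \<le> (LINT t:{0..\<tau>}|lborel. C)"
      unfolding gamma_cdf_def C_def
      using True gamma_density_le[OF assms(1,2)] by (intro set_integral_mono) auto
    also have "\<dots> = C * \<tau>"
      using assms by (subst set_integral_const) (auto simp: mult.commute)
    finally show ?thesis .
  next
    case False
    then have "gamma_cdf k l \<tau> = 0"
      unfolding gamma_cdf_def set_lebesgue_integral_def set_integrable_def
      by (simp add: not_integrable_integral_eq)
    then show ?thesis using \<open>C \<ge> 0\<close> assms by simp
  qed
  also have "C * \<tau> = (l * \<tau>) powr k / Gamma k"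
    using assms unfolding C_def by (simp add: powr_mult powr_diff field_simps)
  finally show ?thesis .
qed

lemma gamma_cdf_le_half:
  assumes "k \<ge> 1" "0 < l" "l \<le> c"
  shows "gamma_cdf k l (1 / (4 * c)) \<le> 1 / 2"
proof -
  define q where "q = l * (1 / (4 * c))"
  have q: "0 < q" "q \<le> 1 / 4" using assms by (auto simp: q_def field_simps)
  have "Gamma (k + 1) = k * Gamma k"
    using assms Gamma_plus1[of k] nonpos_Ints_nonpos[of k] by force
  have "gamma_cdf k l (1 / (4 * c)) \<le> q powr k / Gamma k"
    unfolding q_def using assms by (intro gamma_cdf_le_powr) auto
  also have "\<dots> = k * q powr k / Gamma (k + 1)"
    using assms \<open>Gamma (k + 1) = k * Gamma k\<close> by simp
  also have "\<dots> \<le> k * q powr k / 1"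
    using assms q Gamma_real_ge_one[of "k + 1"] by (intro divide_left_mono) auto
  also have "\<dots> \<le> k * (1 / 4) powr k"
    using assms q by (simp add: mult_left_mono powr_mono2)
  also have "\<dots> = k / (4 * 4 powr (k - 1))"
    by (simp add: powr_diff powr_divide)
  also have "\<dots> \<le> 1 / 4"
    using self_le_four_powr_diff_one[OF assms(1)] by (simp add: divide_le_eq)
  finally show ?thesis by simp
qed

lemma space_hist_alg [simp]: "space (hist_alg M S X n) = space M"
  unfolding hist_alg_def by (subst space_measure_of) auto

lemma sets_hist_alg:
  "sets (hist_alg M S X n) = sigma_sets (space M)
     ({S i -` A \<inter> space M | i A. i \<le> n} \<union>
      {X i -` B \<inter> space M | i B. i \<le> n \<and> B \<in> sets borel})"
  unfolding hist_alg_def by (subst sets_measure_of) auto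

lemma measurable_hist_alg_X:
  assumes "i \<le> n"
  shows "X i \<in> borel_measurable (hist_alg M S X n)"
proof (rule measurableI)
  fix B :: "real set"
  assume "B \<in> sets borel"
  with assms show "X i -` B \<inter> space (hist_alg M S X n) \<in> sets (hist_alg M S X n)"
    unfolding sets_hist_alg by (intro sigma_sets.Basic) auto
qed simp

lemma subalgebra_hist_alg:
  assumes "\<And>i. S i \<in> measurable M (count_space UNIV)" "\<And>i. X i \<in> borel_measurable M"
  shows "subalgebra M (hist_alg M S X n)"
proof -
  have "{S i -` A \<inter> space M | i A. i \<le> n} \<union>
      {X i -` B \<inter> space M | i B. i \<le> n \<and> B \<in> sets borel} \<subseteq> sets M"
    using assms by (auto intro: measurable_sets)
  then show ?thesis
    unfolding subalgebra_def sets_hist_alg by (simp add: sets.sigma_sets_subset)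
qed

lemma alt_semi_markov_prob_space: "alt_semi_markov M S X GY GZ \<Longrightarrow> prob_space M"
  unfolding alt_semi_markov_def by simp

lemma alt_semi_markov_X_measurable:
  "alt_semi_markov M S X GY GZ \<Longrightarrow> X n \<in> borel_measurable M"
  unfolding alt_semi_markov_def by simp

lemma alt_semi_markov_S_measurable:
  assumes "alt_semi_markov M S X GY GZ"
  shows "S n \<in> measurable M (count_space UNIV)"
proof -
  have "\<And>\<omega>. \<omega> \<in> space M \<Longrightarrow> S n \<omega> = (if even n then 1 else 0)"
    using assms unfolding alt_semi_markov_def by simp
  then show ?thesis by (subst measurable_cong) auto
qed

lemma alt_semi_markov_X_mono:
  assumes "alt_semi_markov M S X GY GZ" "\<omega> \<in> space M"
  shows "incseq (\<lambda>n. X n \<omega>)"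
  using assms unfolding alt_semi_markov_def by (intro incseq_SucI) simp

lemma alt_semi_markov_X_nonneg:
  assumes "alt_semi_markov M S X GY GZ" "\<omega> \<in> space M"
  shows "X n \<omega> \<ge> 0"
proof -
  have "X 0 \<omega> = 0" using assms unfolding alt_semi_markov_def by simp
  then show ?thesis using alt_semi_markov_X_mono[OF assms] by (metis incseqD zero_le)
qed

lemma alt_semi_markov_cond_exp:
  assumes "alt_semi_markov M S X GY GZ" "\<tau> \<ge> 0"
  shows "AE \<omega> in M. real_cond_exp M (hist_alg M S X n)
             (indicator {\<omega>'\<in>space M. X (Suc n) \<omega>' - X n \<omega>' \<le> \<tau>}) \<omega>
           = (if S n \<omega> = 1 then GY (X n \<omega>) \<tau> else GZ (X n \<omega>) \<tau>)"
  using assms unfolding alt_semi_markov_def by blast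

lemma (in finite_measure_subalgebra) measure_inter_le_of_real_cond_exp_le:
  assumes A: "A \<in> sets M" and C: "C \<in> sets F"
    and le: "AE x in M. real_cond_exp M F (indicator A) x \<le> p"
  shows "measure M (C \<inter> A) \<le> p * measure M C"
proof -
  have CM: "C \<in> sets M" using C subalg unfolding subalgebra_def by blast
  have intA: "integrable M (indicator A :: 'a \<Rightarrow> real)"
    using A by (intro integrable_real_indicator) (auto simp: emeasure_eq_measure)
  have "measure M (C \<inter> A) = (\<integral>x\<in>C. indicator A x \<partial>M)"
    using A CM by (simp add: set_lebesgue_integral_def indicator_inter_arith[symmetric])
  also have "\<dots> = (\<integral>x\<in>C. real_cond_exp M F (indicator A) x \<partial>M)"
    by (rule real_cond_exp_intA[OF intA C])
  also have "\<dots> \<le> (\<integral>x\<in>C. p \<partial>M)"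
    unfolding set_lebesgue_integral_def using CM intA le
    by (intro integral_mono_AE integrable_mult_indicator real_cond_exp_int(1))
       (auto simp: indicator_def elim!: eventually_mono)
  also have "\<dots> = p * measure M C"
    using CM by (subst set_integral_const) (auto simp: emeasure_eq_measure)
  finally show ?thesis .
qed

lemma (in prob_space) AE_frequently_notin_of_cond_measure_le:
  fixes A :: "nat \<Rightarrow> 'a set"
  assumes subalg: "\<And>n. subalgebra M (F n)"
    and A: "\<And>i n. i < n \<Longrightarrow> A i \<in> sets (F n)"
    and le: "\<And>n C. C \<in> sets (F n) \<Longrightarrow> measure M (C \<inter> A n) \<le> p * measure M C"
    and p: "0 \<le> p" "p < 1"
  shows "AE \<omega> in M. \<forall>m. \<exists>i\<ge>m. \<omega> \<notin> A i"
proof -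
  define E where "E m j = {\<omega>\<in>space M. \<forall>i\<in>{..<j}. \<omega> \<in> A (m + i)}" for m j
  have E_sets: "E m j \<in> sets (F (m + j))" for m j
  proof -
    have space: "space (F (m + j)) = space M" using subalg unfolding subalgebra_def by blast
    show ?thesis unfolding E_def space[symmetric]
    proof (rule sets.sets_Collect_finite_All)
      fix i assume "i \<in> {..<j}"
      then have Ai: "A (m + i) \<in> sets (F (m + j))" by (intro A) simp
      moreover have "{\<omega>\<in>space (F (m + j)). \<omega> \<in> A (m + i)} = A (m + i)"
        using sets.sets_into_space[OF Ai] by auto
      ultimately show "{\<omega>\<in>space (F (m + j)). \<omega> \<in> A (m + i)} \<in> sets (F (m + j))" by simp
    qed simp
  qed
  have E_le: "measure M (E m j) \<le> p ^ j" for m j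
  proof (induction j)
    case (Suc j)
    have "E m (Suc j) = E m j \<inter> A (m + j)" unfolding E_def by (auto simp: less_Suc_eq)
    then have "measure M (E m (Suc j)) \<le> p * measure M (E m j)"
      using le[OF E_sets] by simp
    also have "\<dots> \<le> p ^ Suc j" using Suc p by (simp add: mult_left_mono)
    finally show ?case .
  qed (simp add: E_def)
  have A_sets: "A i \<in> sets M" for i
    using A[of i "Suc i"] subalg unfolding subalgebra_def by blast
  have null: "(\<Inter>i. A (m + i)) \<in> null_sets M" for m
  proof -
    have "measure M (\<Inter>i. A (m + i)) \<le> p ^ j" for j
    proof -
      have "(\<Inter>i. A (m + i)) \<subseteq> E m j"
        using sets.sets_into_space[OF A_sets[of "m + 0"]] unfolding E_def by blast
      then have "measure M (\<Inter>i. A (m + i)) \<le> measure M (E m j)"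
        using E_sets[of m j] subalg unfolding subalgebra_def by (intro finite_measure_mono) auto
      then show ?thesis using E_le[of m j] by simp
    qed
    then have "measure M (\<Inter>i. A (m + i)) \<le> 0"
      using p by (intro LIMSEQ_le_const[OF LIMSEQ_realpow_zero]) auto
    then show ?thesis
      using A_sets by (simp add: null_sets_def emeasure_eq_measure measure_le_0_iff)
  qed
  have "AE \<omega> in M. \<forall>m. \<exists>i. \<omega> \<notin> A (m + i)"
    unfolding AE_all_countable using AE_not_in[OF null] by simp
  then show ?thesis
    by eventually_elim (meson le_add1)
qed

lemma unbounded_of_frequently_increment_gt:
  fixes x :: "nat \<Rightarrow> real"
  assumes "incseq x" "\<tau> > 0" "\<forall>m. \<exists>i\<ge>m. x (Suc i) - x i > \<tau>"
  shows "\<not> (\<exists>B. \<forall>n. x n \<le> B)"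
proof
  assume "\<exists>B. \<forall>n. x n \<le> B"
  then obtain B where B: "\<And>n. x n \<le> B" by blast
  have "\<exists>n. x 0 + real j * \<tau> \<le> x n" for j
  proof (induction j)
    case (Suc j)
    then obtain n where n: "x 0 + real j * \<tau> \<le> x n" by blast
    obtain i where "i \<ge> n" "x (Suc i) - x i > \<tau>" using assms(3) by blast
    moreover have "x n \<le> x i" using \<open>i \<ge> n\<close> assms(1) by (simp add: incseqD)
    ultimately have "x 0 + real (Suc j) * \<tau> \<le> x (Suc i)" using n by (simp add: algebra_simps)
    then show ?case by blast
  qed auto
  moreover obtain j :: nat where "real j > (B - x 0) / \<tau>" using reals_Archimedean2 by blast
  then have "x 0 + real j * \<tau> > B" using assms(2) by (simp add: field_simps)
  ultimately show False using B by (meson not_le order_trans)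
qed

lemma alt_semi_markov_not_explosive:
  assumes asm: "alt_semi_markov M S X GY GZ"
    and \<tau>: "\<tau> > 0" and p: "0 \<le> p" "p < 1"
    and GY: "\<And>x. x \<ge> 0 \<Longrightarrow> GY x \<tau> \<le> p" and GZ: "\<And>x. x \<ge> 0 \<Longrightarrow> GZ x \<tau> \<le> p"
  shows "measure M {\<omega>\<in>space M. \<exists>B. \<forall>n. X n \<omega> \<le> B} = 0"
proof -
  interpret prob_space M using asm by (rule alt_semi_markov_prob_space)
  note [measurable] = alt_semi_markov_X_measurable[OF asm]
  note subalg = subalgebra_hist_alg[OF alt_semi_markov_S_measurable[OF asm]
      alt_semi_markov_X_measurable[OF asm]]
  define A where "A n = {\<omega>\<in>space M. X (Suc n) \<omega> - X n \<omega> \<le> \<tau>}" for n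
  have A_hist: "A i \<in> sets (hist_alg M S X n)" if "i < n" for i n
  proof -
    have [measurable]: "X i \<in> borel_measurable (hist_alg M S X n)"
      "X (Suc i) \<in> borel_measurable (hist_alg M S X n)"
      using that by (auto intro: measurable_hist_alg_X)
    have "{\<omega>\<in>space (hist_alg M S X n). X (Suc i) \<omega> - X i \<omega> \<le> \<tau>} \<in> sets (hist_alg M S X n)"
      by measurable
    then show ?thesis unfolding A_def by simp
  qed
  have "measure M (C \<inter> A n) \<le> p * measure M C" if "C \<in> sets (hist_alg M S X n)" for C n
  proof -
    interpret finite_measure_subalgebra M "hist_alg M S X n"
      by unfold_locales (rule subalg)
    have "AE \<omega> in M. real_cond_exp M (hist_alg M S X n) (indicator (A n)) \<omega> \<le> p"
      using alt_semi_markov_cond_exp[OF asm less_imp_le[OF \<tau>], of n] AE_space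
    proof eventually_elim
      case (elim \<omega>)
      then show ?case
        using GY GZ alt_semi_markov_X_nonneg[OF asm \<open>\<omega> \<in> space M\<close>] by (simp add: A_def)
    qed
    then show ?thesis
      using that by (intro measure_inter_le_of_real_cond_exp_le) (auto simp: A_def)
  qed
  then have "AE \<omega> in M. \<forall>m. \<exists>i\<ge>m. \<omega> \<notin> A i"
    using subalg A_hist p by (intro AE_frequently_notin_of_cond_measure_le)
  then have "AE \<omega> in M. \<not> (\<exists>B. \<forall>n. X n \<omega> \<le> B)"
    using AE_space
  proof eventually_elim
    case (elim \<omega>)
    then show ?case
      using \<tau> alt_semi_markov_X_mono[OF asm]
      by (intro unbounded_of_frequently_increment_gt) (auto simp: A_def not_le)
  qed
  then show ?thesis
    by (auto simp: measure_def dest: AE_E2)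
qed

theorem proposition1:
  fixes M :: "'a measure" and S :: "nat \<Rightarrow> 'a \<Rightarrow> nat" and X :: "nat \<Rightarrow> 'a \<Rightarrow> real"
    and kY kZ lY lZ :: "real \<Rightarrow> real" and c :: real
  assumes "kY \<in> borel_measurable borel" and "kZ \<in> borel_measurable borel"
    and "lY \<in> borel_measurable borel" and "lZ \<in> borel_measurable borel"
    and "\<And>x. x \<ge> 0 \<Longrightarrow> kY x \<ge> 1" and "\<And>x. x \<ge> 0 \<Longrightarrow> kZ x \<ge> 1"
    and "\<And>x. x \<ge> 0 \<Longrightarrow> lY x > 0" and "\<And>x. x \<ge> 0 \<Longrightarrow> lZ x > 0"
    and "c > 0"
    and "\<And>x. x \<ge> 0 \<Longrightarrow> lY x \<le> c" and "\<And>x. x \<ge> 0 \<Longrightarrow> lZ x \<le> c"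
    and "alt_semi_markov M S X (\<lambda>x \<tau>. gamma_cdf (kY x) (lY x) \<tau>)
                               (\<lambda>x \<tau>. gamma_cdf (kZ x) (lZ x) \<tau>)"
  shows "measure M {\<omega>\<in>space M. \<exists>B. \<forall>n. X n \<omega> \<le> B} = 0"
proof (rule alt_semi_markov_not_explosive[OF assms(12)])
  show "0 < 1 / (4 * c)" using \<open>c > 0\<close> by simp
  show "gamma_cdf (kY x) (lY x) (1 / (4 * c)) \<le> 1 / 2" if "x \<ge> 0" for x
    using that assms(5,7,10) by (intro gamma_cdf_le_half) auto
  show "gamma_cdf (kZ x) (lZ x) (1 / (4 * c)) \<le> 1 / 2" if "x \<ge> 0" for x
    using that assms(6,8,11) by (intro gamma_cdf_le_half) auto
qed simp_all

end
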